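(* Let $q$ be odd, let $n\ge3$ and $1\le b\le n-2$, and let $C_1,C_2$ be $[n,n-1]_q$-linear codes that are both $b$-symbol MDS codes. Suppose there exist $\mathbf{x}=(x_1,\dots,x_n)\in C_1\cap C_2$ and a hole $H\in\mathbb{H}(\chi_1(\mathbf{x}))$ such that $w_b(\mathbf{x})=d_b(C_1)$, $|H|\ge b-1$, and $\{1,n\}\cap H\ne\emptyset$. Then the $[2n,2n-2]_q$-linear code $C=\{[\mathbf{u}+\mathbf{v},\mathbf{u}-\mathbf{v}]:\mathbf{u}\in C_1,\mathbf{v}\in C_2\}$ is a $b$-symbol AMDS code, i.e., $d_b(C)=b+1$.
   Context: For $\mathbf{x}\in\mathbb{F}_q^L$ and $1\le b\le L$, $\chi_b(\mathbf{x})=\{i:(x_i,\dots,x_{i+b-1})\ne\mathbf{0}\}$ (indices mod $L$), $w_b(\mathbf{x})=|\chi_b(\mathbf{x})|$, $d_b(C)=\min_{\mathbf{0}\ne\mathbf{c}\in C}w_b(\mathbf{c})$; $\chi_1$ is the Hamming support. For $J\subseteq\{1,\dots,n\}$, a hole of $J$ of size $h\ge1$ is a set $\{a+1,\dots,a+h\}$ disjoint from $J$ (indices mod $n$) with $a,a+h+1\in J$; $\mathbb{H}(J)$ is the set of holes of $J$. An $[n,k]_q$-linear code $C$ is $b$-symbol MDS if $d_b(C)=\min\{n-k+b,n\}$ and $b$-symbol AMDS if $d_b(C)=\min\{n-k+b,n\}-1$. *)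

theory Defs
  imports Complex_Main "HOL-Library.Function_Algebras"
begin

text \<open>Vectors of length L over a field are functions nat => 'a that vanish
  outside {0..<L}. Positions are 0-based: the paper's position i corresponds
  to index i-1 here.\<close>

definition fscale :: "'a::field \<Rightarrow> (nat \<Rightarrow> 'a) \<Rightarrow> (nat \<Rightarrow> 'a)" where
  "fscale c x = (\<lambda>i. c * x i)"

lemma vector_space_fscale: "vector_space (fscale :: 'a::field \<Rightarrow> _)"
  by unfold_locales (auto simp: fscale_def fun_eq_iff algebra_simps)

definition linear_code :: "nat \<Rightarrow> nat \<Rightarrow> (nat \<Rightarrow> 'a::field) set \<Rightarrow> bool" where
  "linear_code L k C \<longleftrightarrow>
     module.subspace fscale C \<and> (\<forall>x\<in>C. \<forall>i\<ge>L. x i = 0) \<and>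
     vector_space.dim fscale C = k"

definition chi :: "nat \<Rightarrow> nat \<Rightarrow> (nat \<Rightarrow> 'a::zero) \<Rightarrow> nat set" where
  "chi L b x = {i. i < L \<and> (\<exists>j<b. x ((i + j) mod L) \<noteq> 0)}"

definition wb :: "nat \<Rightarrow> nat \<Rightarrow> (nat \<Rightarrow> 'a::zero) \<Rightarrow> nat" where
  "wb L b x = card (chi L b x)"

definition db :: "nat \<Rightarrow> nat \<Rightarrow> (nat \<Rightarrow> 'a::zero) set \<Rightarrow> nat" where
  "db L b C = Inf {wb L b c | c. c \<in> C \<and> c \<noteq> 0}"

definition holes :: "nat \<Rightarrow> nat set \<Rightarrow> nat set set" where
  "holes n J = {H. \<exists>a h. a < n \<and> h \<ge> 1 \<and>
      H = {(a + t) mod n | t. 1 \<le> t \<and> t \<le> h} \<and> H \<inter> J = {} \<and>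
      a \<in> J \<and> (a + h + 1) mod n \<in> J}"

definition b_MDS :: "nat \<Rightarrow> nat \<Rightarrow> nat \<Rightarrow> (nat \<Rightarrow> 'a::field) set \<Rightarrow> bool" where
  "b_MDS L k b C \<longleftrightarrow> db L b C = min (L - k + b) L"

definition b_AMDS :: "nat \<Rightarrow> nat \<Rightarrow> nat \<Rightarrow> (nat \<Rightarrow> 'a::field) set \<Rightarrow> bool" where
  "b_AMDS L k b C \<longleftrightarrow> db L b C = min (L - k + b) L - 1"

definition uv_concat :: "nat \<Rightarrow> (nat \<Rightarrow> 'a::ab_group_add) \<Rightarrow> (nat \<Rightarrow> 'a) \<Rightarrow> nat \<Rightarrow> 'a" where
  "uv_concat n u v = (\<lambda>i. if i < n then u i + v i
                          else if i < 2 * n then u (i - n) - v (i - n) else 0)"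

end

theory Submission
  imports Defs
begin

text \<open>
  Write c = [u + v, u - v]. In a field of odd order 2 is invertible and 2 u i = c i + c (i + n),
  so a codeword of C with a single nonzero entry comes from a u in C1 with a single nonzero entry,
  whose b-weight is at most b < d_b(C1) = b + 1; a word with two nonzero entries has b-weight at
  least b + 1 because b < 2n. Hence d_b(C) \<ge> b + 1. Conversely x in C1 \<inter> C2 gives [2x, 0] in C.
  The hole of size at least b - 1 through position 1 or n forces at least b - 1 cyclically
  consecutive zeros between the last and the first support position of x, so reduction mod n maps
  the b-support of [2x, 0] injectively into that of x, and w_b([2x, 0]) \<le> w_b(x) = b + 1.
  The dimension 2n - 2 comes from the direct sum of the images [u, u] of C1 and [v, -v] of C2.
\<close>

section \<open>Fields of odd order\<close>

lemma even_card_if_fixpoint_free_involution: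
  assumes "finite S" "\<And>x. x \<in> S \<Longrightarrow> s x \<in> S"
    and "\<And>x. x \<in> S \<Longrightarrow> s (s x) = x" "\<And>x. x \<in> S \<Longrightarrow> s x \<noteq> x"
  shows "even (card S)"
  using assms
proof (induction "card S" arbitrary: S rule: less_induct)
  case less
  show ?case
  proof (cases "S = {}")
    case False
    then obtain z where z: "z \<in> S" by auto
    let ?P = "{z, s z}"
    have "s z \<noteq> z" using z less.prems(4) by blast
    then have P: "?P \<subseteq> S" "card ?P = 2" using z less.prems(2) by auto
    have card_Diff: "card (S - ?P) = card S - 2" and "2 \<le> card S"
      using P less.prems(1) card_mono[OF less.prems(1) P(1)] by (simp_all add: card_Diff_subset)
    have "even (card (S - ?P))"
    proof (rule less.hyps)
      show "card (S - ?P) < card S" using card_Diff \<open>2 \<le> card S\<close> by simp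
    qed (use less.prems z in \<open>auto, metis\<close>)
    with card_Diff \<open>2 \<le> card S\<close> show ?thesis by simp
  qed simp
qed

lemma two_neq_zero_if_odd_card:
  assumes "odd (card (UNIV :: 'a::{ring_1,finite} set))"
  shows "(2::'a) \<noteq> 0"
proof
  assume "(2::'a) = 0"
  then have "x + 1 + 1 = x" for x :: 'a
    by (metis add.assoc add.right_neutral one_add_one)
  then have "even (card (UNIV :: 'a set))"
    by (intro even_card_if_fixpoint_free_involution[where s = "\<lambda>x. x + 1"]) auto
  with assms show False by contradiction
qed

lemma add_self_eq_0_iff:
  fixes a :: "'a::ring_1_no_zero_divisors"
  assumes "(2::'a) \<noteq> 0"
  shows "a + a = 0 \<longleftrightarrow> a = 0"
  using assms by (metis mult_2 mult_eq_0_iff)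

section \<open>Dimension of a direct sum\<close>

context vector_space
begin

lemma independent_Un_if_span_Int_zero:
  assumes "independent S" "independent T" "finite T" "span S \<inter> span T = {0}"
  shows "independent (S \<union> T)"
  using assms(3,2,4)
proof (induction T rule: finite_induct)
  case empty
  then show ?case using assms(1) by simp
next
  case (insert a T)
  have "span T \<subseteq> span (insert a T)" by (rule span_mono) auto
  with insert.prems(2) have "span S \<inter> span T = {0}"
    using span_zero by blast
  moreover have "independent T"
    using insert.prems(1) by (meson dependent_mono subset_insertI)
  ultimately have "independent (S \<union> T)"
    using insert.IH by blast
  have a: "a \<in> span (insert a T)" "a \<notin> span T"
    using insert.prems(1) insert.hyps(2) by (simp_all add: span_base independent_insert)
  have "a \<notin> span (S \<union> T)"
  proof
    assume "a \<in> span (S \<union> T)"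
    then obtain y z where "a = y + z" "y \<in> span S" "z \<in> span T" by (auto simp: span_Un)
    moreover have "y = a - z" using \<open>a = y + z\<close> by simp
    then have "y \<in> span (insert a T)"
      using a(1) \<open>z \<in> span T\<close> \<open>span T \<subseteq> _\<close> span_diff by blast
    ultimately have "y = 0" using insert.prems(2) by blast
    with \<open>a = y + z\<close> \<open>z \<in> span T\<close> a(2) show False by simp
  qed
  moreover have "a \<notin> S"
    using a(1) span_base[of a S] insert.prems dependent_zero[of "insert a T"] by auto
  ultimately show ?case
    using \<open>independent (S \<union> T)\<close> by (simp add: independent_insert)
qed

text \<open>The finite spanning set \<open>A\<close> makes the bases of \<open>S\<close> and \<open>T\<close> finite; without it \<open>dim\<close>,
  being the cardinality of a basis, could be the junk value \<open>0\<close>.\<close>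

lemma dim_sums_eq_add_if_Int_zero:
  assumes "subspace S" "subspace T" "S \<inter> T = {0}"
    and "finite A" "S \<union> T \<subseteq> span A"
  shows "dim {x + y | x y. x \<in> S \<and> y \<in> T} = dim S + dim T"
proof -
  obtain BS where BS: "BS \<subseteq> S" "independent BS" "S \<subseteq> span BS" "card BS = dim S"
    using basis_exists by blast
  obtain BT where BT: "BT \<subseteq> T" "independent BT" "T \<subseteq> span BT" "card BT = dim T"
    using basis_exists by blast
  have span_BS: "span BS = S" and span_BT: "span BT = T"
    using BS BT assms(1,2) by (simp_all add: span_subspace)
  have "finite BS" "finite BT"
    using independent_span_bound[OF assms(4) BS(2)] independent_span_bound[OF assms(4) BT(2)]
      BS(1) BT(1) assms(5) by auto
  have "BS \<inter> BT \<subseteq> {0}"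
    using BS(1) BT(1) assms(3) by blast
  moreover have "0 \<notin> BS"
    using BS(2) dependent_zero by blast
  ultimately have "BS \<inter> BT = {}" by blast
  have "independent (BS \<union> BT)"
    using independent_Un_if_span_Int_zero[OF BS(2) BT(2) \<open>finite BT\<close>] span_BS span_BT assms(3)
    by simp
  then have "dim (span (BS \<union> BT)) = card BS + card BT"
    using \<open>finite BS\<close> \<open>finite BT\<close> \<open>BS \<inter> BT = {}\<close>
    by (simp add: dim_eq_card_independent card_Un_disjoint)
  then show ?thesis
    by (simp add: span_Un span_BS span_BT BS(4) BT(4))
qed

end

context Vector_Spaces.linear
begin

lemma dim_image_eq_if_inj_on:
  assumes "inj_on f (vs1.span S)"
  shows "vs2.dim (f ` S) = vs1.dim S"
proof -
  obtain B where B: "B \<subseteq> S" "vs1.independent B" "S \<subseteq> vs1.span B" "card B = vs1.dim S"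
    using vs1.basis_exists by blast
  then have "vs1.span B = vs1.span S"
    using vs1.span_mono vs1.span_span by (metis subset_antisym)
  with assms have "inj_on f B" "vs2.independent (f ` B)"
    using B vs1.span_superset inj_on_subset independent_injective_image by metis+
  have "vs2.dim (f ` S) = vs2.dim (vs2.span (f ` S))"
    by simp
  also have "\<dots> = vs2.dim (vs2.span (f ` B))"
    by (simp only: span_image \<open>vs1.span B = vs1.span S\<close>)
  also have "\<dots> = card B"
    using \<open>vs2.independent (f ` B)\<close> \<open>inj_on f B\<close>
    by (simp add: vs2.dim_eq_card_independent card_image)
  finally show ?thesis using B(4) by simp
qed

end

lemma in_span_unit_vectors:
  fixes x :: "nat \<Rightarrow> 'a::field"
  assumes "\<forall>i\<ge>L. x i = 0"
  shows "x \<in> module.span fscale ((\<lambda>k i. if i = k then 1 else 0) ` {..<L})"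
proof -
  interpret vector_space "fscale :: 'a \<Rightarrow> _" by (rule vector_space_fscale)
  let ?e = "\<lambda>k i. if i = k then 1 else (0::'a)"
  show ?thesis
    using assms
  proof (induction L arbitrary: x)
    case 0
    then have "x = 0" by (auto simp: zero_fun_def)
    then show ?case using span_zero by metis
  next
    case (Suc L)
    have x: "x = x(L := 0) + fscale (x L) (?e L)"
      by (auto simp: fscale_def)
    have "x(L := 0) \<in> span (?e ` {..<L})"
      using Suc by simp
    moreover have "span (?e ` {..<L}) \<subseteq> span (?e ` {..<Suc L})"
      by (rule span_mono) auto
    ultimately have "x(L := 0) \<in> span (?e ` {..<Suc L})" by blast
    moreover have "fscale (x L) (?e L) \<in> span (?e ` {..<Suc L})"
      by (intro span_scale span_base) simp
    ultimately show ?case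
      by (subst x) (rule span_add)
  qed
qed

section \<open>Cyclic windows and the \<open>b\<close>-symbol weight\<close>

lemma mod_less_double: "(x::nat) < 2 * L \<Longrightarrow> x mod L = (if x < L then x else x - L)"
  by (simp add: le_mod_geq)

definition window_starts :: "nat \<Rightarrow> nat \<Rightarrow> nat \<Rightarrow> nat set" where
  "window_starts L b p = {a. a < L \<and> (\<exists>j<b. (a + j) mod L = p)}"

lemma chi_eq_UN_window_starts:
  "chi L b c = (\<Union>p \<in> {p. p < L \<and> c p \<noteq> 0}. window_starts L b p)"
  unfolding chi_def window_starts_def by (auto, metis mod_less_divisor gr_zeroI not_less_zero)

lemma add_diff_mod_self:
  fixes p L j :: nat
  assumes "p < L" "j \<le> L"
  shows "(p + L - j) mod L = (if j \<le> p then p - j else p + L - j)"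
  using assms mod_less_double[of "p + L - j" L] by auto

lemma window_starts_eq_image:
  assumes "p < L" "b \<le> L"
  shows "window_starts L b p = (\<lambda>j. (p + L - j) mod L) ` {..<b}"
proof (intro subset_antisym subsetI)
  fix a assume "a \<in> window_starts L b p"
  then obtain j where j: "a < L" "j < b" "(a + j) mod L = p" by (auto simp: window_starts_def)
  have "a + j < 2 * L" using j assms by linarith
  then have "a + j = p \<or> a + j = p + L"
    using j(3) by (auto simp: mod_less_double split: if_splits)
  with j assms have "a = (p + L - j) mod L"
    by (auto simp: add_diff_mod_self)
  with \<open>j < b\<close> show "a \<in> (\<lambda>j. (p + L - j) mod L) ` {..<b}" by blast
next
  fix a assume "a \<in> (\<lambda>j. (p + L - j) mod L) ` {..<b}"
  then obtain j where "j < b" "a = (p + L - j) mod L" by blast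
  with assms have "(a + j) mod L = p"
    by (simp add: mod_add_left_eq)
  with assms \<open>j < b\<close> \<open>a = _\<close> show "a \<in> window_starts L b p"
    by (auto simp: window_starts_def)
qed

lemma card_window_starts:
  assumes "p < L" "b \<le> L"
  shows "card (window_starts L b p) = b"
proof -
  have "inj_on (\<lambda>j. (p + L - j) mod L) {..<b}"
    using assms by (intro inj_onI) (simp add: add_diff_mod_self split: if_splits)
  then show ?thesis by (simp add: window_starts_eq_image[OF assms] card_image)
qed

lemma Suc_mod_notin_window_starts:
  assumes "p < L" "b < L"
  shows "Suc p mod L \<notin> window_starts L b p"
proof
  assume "Suc p mod L \<in> window_starts L b p"
  then obtain j where "j < b" "(Suc p + j) mod L = p"
    by (auto simp: window_starts_def mod_add_left_eq)
  moreover have "Suc p + j < 2 * L" using assms \<open>j < b\<close> by linarith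
  ultimately show False
    using assms by (simp add: mod_less_double split: if_splits)
qed

lemma finite_chi [simp]: "finite (chi L b c)"
  by (rule finite_subset[of _ "{..<L}"]) (auto simp: chi_def)

lemma card_chi_le_if_single_support:
  assumes "k < L" "b \<le> L" "\<And>i. i < L \<Longrightarrow> i \<noteq> k \<Longrightarrow> c i = 0"
  shows "card (chi L b c) \<le> b"
proof -
  have "chi L b c \<subseteq> window_starts L b k"
    using assms(3) by (auto simp: chi_eq_UN_window_starts)
  then show ?thesis
    using card_mono[OF _ \<open>chi L b c \<subseteq> _\<close>] card_window_starts[OF assms(1,2)]
    by (simp add: window_starts_eq_image[OF assms(1,2)])
qed

lemma b_lt_card_chi_if_two_nonzero:
  assumes "p < L" "q < L" "p \<noteq> q" "c p \<noteq> 0" "c q \<noteq> 0" "0 < b" "b < L"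
  shows "b < card (chi L b c)"
proof (rule ccontr)
  assume "\<not> b < card (chi L b c)"
  have "window_starts L b r = chi L b c" if "r < L" "c r \<noteq> 0" for r
  proof (rule card_subset_eq)
    show sub: "window_starts L b r \<subseteq> chi L b c"
      using that by (auto simp: chi_eq_UN_window_starts)
    show "card (window_starts L b r) = card (chi L b c)"
      using \<open>\<not> b < _\<close> card_mono[OF finite_chi sub] card_window_starts[OF \<open>r < L\<close>] \<open>b < L\<close>
      by simp
  qed simp
  then have same: "window_starts L b p = window_starts L b q"
    using assms by simp
  have "q \<in> window_starts L b q"
    using assms by (auto simp: window_starts_def)
  then have "q \<in> window_starts L b p"
    by (simp add: same)
  then obtain j where j: "j < b" "(q + j) mod L = p"
    by (auto simp: window_starts_def)
  with assms(2,3) have "j \<noteq> 0" by (metis add_0_right mod_less)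
  then have "(Suc q mod L + (j - 1)) mod L = p"
    using mod_add_left_eq[of "Suc q" L "j - 1"] j(2) by simp
  with j(1) assms(2) have "Suc q mod L \<in> window_starts L b p"
    unfolding window_starts_def by (intro CollectI conjI exI[of _ "j - 1"]) simp_all
  with same Suc_mod_notin_window_starts[OF assms(2,7)] show False by simp
qed

lemma db_le_wb: "c \<in> C \<Longrightarrow> c \<noteq> 0 \<Longrightarrow> db L b C \<le> wb L b c"
  unfolding db_def by (rule cInf_lower) auto

lemma db_eqI:
  assumes "c \<in> C" "c \<noteq> 0" "wb L b c = d" "\<And>c. c \<in> C \<Longrightarrow> c \<noteq> 0 \<Longrightarrow> d \<le> wb L b c"
  shows "db L b C = d"
  unfolding db_def by (rule cInf_eq_minimum) (use assms in auto)

section \<open>The code \<open>[u + v, u - v]\<close>\<close>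

lemma uv_concat_apply_less: "i < n \<Longrightarrow> uv_concat n u v i = u i + v i"
  and uv_concat_apply_add: "i < n \<Longrightarrow> uv_concat n u v (i + n) = u i - v i"
  by (simp_all add: uv_concat_def)

lemma uv_concat_self: "uv_concat n x x = (\<lambda>i. if i < n then x i + x i else 0)"
  by (auto simp: uv_concat_def)

lemma chi_1: "chi n 1 x = {i. i < n \<and> x i \<noteq> 0}"
  by (auto simp: chi_def)

lemma support_gap_ge_if_hole:
  fixes x :: "nat \<Rightarrow> 'a::zero"
  assumes "H \<in> holes n (chi n 1 x)" "b - 1 \<le> card H" "{0, n - 1} \<inter> H \<noteq> {}"
    and "q < p" "p < n" "x p \<noteq> 0" "x q \<noteq> 0"
  shows "p + b \<le> n + q"
proof -
  obtain a h where ah: "a < n" "H = {(a + t) mod n | t. 1 \<le> t \<and> t \<le> h}" "H \<inter> chi n 1 x = {}"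
    using assms(1) unfolding holes_def by blast
  have zero: "x ((a + t) mod n) = 0" if "1 \<le> t" "t \<le> h" for t
  proof -
    have "(a + t) mod n \<notin> chi n 1 x" using ah(2,3) that by blast
    then show ?thesis using ah(1) unfolding chi_1 by simp
  qed
  \<comment> \<open>a hole starting before \<open>p\<close> also ends before \<open>p\<close>, so it contains neither \<open>0\<close> nor \<open>n - 1\<close>\<close>
  have "p \<le> a"
  proof (rule ccontr)
    assume "\<not> p \<le> a"
    then have "h < p - a"
      using zero[of "p - a"] assms(5,6) by fastforce
    then have avoid: "(a + t) mod n \<notin> {0, n - 1}" if "1 \<le> t" "t \<le> h" for t
      using that assms(5) by simp
    obtain y where "y \<in> H" "y \<in> {0, n - 1}"
      using assms(3) by blast
    then obtain t where t: "1 \<le> t" "t \<le> h" "(a + t) mod n \<in> {0, n - 1}"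
      using ah(2) by auto
    from avoid[OF t(1,2)] t(3) show False by contradiction
  qed
  moreover have "(a + (n + q - a)) mod n = q"
    using ah(1) assms(4,5) by simp
  ultimately have "h < n + q - a"
    using zero[of "n + q - a"] ah(1) assms(7) by fastforce
  moreover have "card H \<le> h"
  proof -
    have "H = (\<lambda>t. (a + t) mod n) ` {1..h}" using ah(2) by auto
    then show ?thesis using card_image_le[of "{1..h}"] by simp
  qed
  ultimately show ?thesis
    using assms(2) \<open>p \<le> a\<close> by linarith
qed

lemma chi_uv_concat_selfE:
  fixes x :: "nat \<Rightarrow> 'a::ab_group_add"
  assumes "i \<in> chi (2 * n) b (uv_concat n x x)" "b \<le> n"
  obtains j k where "j < b" "k < n" "x k \<noteq> 0" "i + j = k \<or> i + j = k + 2 * n"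
proof -
  obtain j where j: "i < 2 * n" "j < b" "uv_concat n x x ((i + j) mod (2 * n)) \<noteq> 0"
    using assms(1) by (auto simp: chi_def)
  define k where "k = (i + j) mod (2 * n)"
  have "k < n" "x k \<noteq> 0"
    using j(3) by (auto simp: uv_concat_self k_def split: if_splits)
  moreover have "i + j < 2 * (2 * n)" using j assms(2) by linarith
  then have "i + j = k \<or> i + j = k + 2 * n"
    by (auto simp: k_def mod_less_double)
  ultimately show thesis using that j(2) by blast
qed

lemma uv_concat_self_eq_0_iff:
  fixes x :: "nat \<Rightarrow> 'a::ring_1_no_zero_divisors"
  assumes "(2::'a) \<noteq> 0"
  shows "uv_concat n x x = 0 \<longleftrightarrow> (\<forall>i<n. x i = 0)"
  using add_self_eq_0_iff[OF assms] by (auto simp: uv_concat_self fun_eq_iff)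

lemma wb_uv_concat_self_le:
  fixes x :: "nat \<Rightarrow> 'a::ab_group_add"
  assumes hole: "H \<in> holes n (chi n 1 x)" "b - 1 \<le> card H" "{0, n - 1} \<inter> H \<noteq> {}"
    and "b \<le> n"
  shows "wb (2 * n) b (uv_concat n x x) \<le> wb n b x"
  unfolding wb_def
proof (rule card_inj_on_le[OF _ _ finite_chi])
  let ?C = "chi (2 * n) b (uv_concat n x x)"
  have lt: "i < 2 * n" if "i \<in> ?C" for i
    using that by (simp add: chi_def)
  show "(\<lambda>i. i mod n) ` ?C \<subseteq> chi n b x"
  proof clarify
    fix i assume "i \<in> ?C"
    then obtain j k where jk: "j < b" "k < n" "x k \<noteq> 0" "i + j = k \<or> i + j = k + 2 * n"
      using assms(4) by (rule chi_uv_concat_selfE)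
    have "i mod n < n" using jk(2) by simp
    then have "i mod n + j < 2 * n" "i < 2 * n"
      using lt[OF \<open>i \<in> ?C\<close>] jk(1) assms(4) by linarith+
    then have "(i mod n + j) mod n = k"
      using jk(4) jk(2) by (auto simp: mod_less_double split: if_splits)
    with jk(1-3) \<open>k < n\<close> show "i mod n \<in> chi n b x"
      by (auto simp: chi_def)
  qed
  \<comment> \<open>windows at \<open>i\<close> and \<open>i + n\<close> would see support positions \<open>k' < k\<close> of \<open>x\<close> with a
      wrap-around gap shorter than \<open>b\<close>\<close>
  have not_both: "i + n \<notin> ?C" if "i < n" "i \<in> ?C" for i
  proof
    assume "i + n \<in> ?C"
    then obtain j' k' where jk': "j' < b" "k' < n" "x k' \<noteq> 0" "i + n + j' = k' \<or> i + n + j' = k' + 2 * n"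
      using assms(4) by (rule chi_uv_concat_selfE)
    obtain j k where jk: "j < b" "k < n" "x k \<noteq> 0" "i + j = k \<or> i + j = k + 2 * n"
      using \<open>i \<in> ?C\<close> assms(4) by (rule chi_uv_concat_selfE)
    have "i + j = k" "i + n + j' = k' + 2 * n"
      using jk jk' \<open>i < n\<close> assms(4) by linarith+
    then have "k + b \<le> n + k'"
      using support_gap_ge_if_hole[OF hole, of k' k] jk jk' assms(4) by linarith
    with \<open>i + j = k\<close> \<open>i + n + j' = k' + 2 * n\<close> jk(1) jk'(1) show False
      by linarith
  qed
  show "inj_on (\<lambda>i. i mod n) ?C"
  proof
    fix i i' assume "i \<in> ?C" "i' \<in> ?C" "i mod n = i' mod n"
    then have "i = i' \<or> (i < n \<and> i' = i + n) \<or> (i' < n \<and> i = i' + n)"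
      using lt[of i] lt[of i'] by (auto simp: mod_less_double split: if_splits)
    with \<open>i \<in> ?C\<close> \<open>i' \<in> ?C\<close> not_both show "i = i'" by blast
  qed
qed

lemma b_lt_wb_uv_concat:
  fixes u v :: "nat \<Rightarrow> 'a::ring_1_no_zero_divisors"
  assumes two: "(2::'a) \<noteq> 0" and "0 < b" "b \<le> n"
    and "b < db n b C1" "u \<in> C1" "uv_concat n u v \<noteq> 0"
  shows "b < wb (2 * n) b (uv_concat n u v)"
proof -
  let ?c = "uv_concat n u v"
  obtain p where p: "?c p \<noteq> 0" using assms(6) by (auto simp: fun_eq_iff)
  then have "p < 2 * n" by (auto simp: uv_concat_def split: if_splits)
  show ?thesis
  proof (cases "\<exists>q < 2 * n. q \<noteq> p \<and> ?c q \<noteq> 0")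
    case True
    then obtain q where q: "q < 2 * n" "p \<noteq> q" "?c q \<noteq> 0" by blast
    from assms(2,3) have "b < 2 * n" by linarith
    with \<open>p < 2 * n\<close> q p assms(2) show ?thesis
      unfolding wb_def by (intro b_lt_card_chi_if_two_nonzero[of p _ q])
  next
    case False
    then have only_p: "?c q = 0" if "q < 2 * n" "q \<noteq> p" for q
      using that by blast
    \<comment> \<open>\<open>u\<close> is determined by \<open>c\<close>, so it has a single nonzero entry as well\<close>
    have halves: "u i + u i = ?c i + ?c (i + n)" if "i < n" for i
      using that by (simp add: uv_concat_def)
    define k where "k = p mod n"
    have "k < n" "p = k \<or> p = k + n"
      using \<open>p < 2 * n\<close> by (auto simp: k_def mod_less_double)
    have "?c k + ?c (k + n) = ?c p"
      using \<open>p = k \<or> p = k + n\<close> \<open>k < n\<close> only_p[of k] only_p[of "k + n"] by auto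
    with halves[OF \<open>k < n\<close>] p have "u k + u k \<noteq> 0" by simp
    then have "u \<noteq> 0" by auto
    have "u i = 0" if "i < n" "i \<noteq> k" for i
    proof -
      have "u i + u i = 0"
        using halves[OF \<open>i < n\<close>] \<open>p = k \<or> p = k + n\<close> only_p[of i] only_p[of "i + n"] that \<open>k < n\<close>
        by auto
      then show ?thesis using add_self_eq_0_iff[OF two] by blast
    qed
    with \<open>k < n\<close> assms(3) have "wb n b u \<le> b"
      unfolding wb_def by (rule card_chi_le_if_single_support)
    with db_le_wb[OF \<open>u \<in> C1\<close> \<open>u \<noteq> 0\<close>, of n b] assms(4) show ?thesis by simp
  qed
qed

lemma inj_on_uv_concat_left:
  assumes "\<forall>u\<in>C. \<forall>i\<ge>n. u i = 0"
  shows "inj_on (\<lambda>u. uv_concat n u v) C"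
proof (rule inj_onI)
  fix u u' assume "u \<in> C" "u' \<in> C" and eq: "uv_concat n u v = uv_concat n u' v"
  have "u i = u' i" for i
  proof (cases "i < n")
    case True
    with fun_cong[OF eq, of i] show ?thesis by (simp add: uv_concat_apply_less)
  next
    case False
    with assms \<open>u \<in> C\<close> \<open>u' \<in> C\<close> show ?thesis by (metis not_less)
  qed
  then show "u = u'" ..
qed

lemma inj_on_uv_concat_right:
  assumes "\<forall>v\<in>C. \<forall>i\<ge>n. v i = 0"
  shows "inj_on (uv_concat n u) C"
proof (rule inj_onI)
  fix v v' assume "v \<in> C" "v' \<in> C" and eq: "uv_concat n u v = uv_concat n u v'"
  have "v i = v' i" for i
  proof (cases "i < n")
    case True
    with fun_cong[OF eq, of i] show ?thesis by (simp add: uv_concat_apply_less)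
  next
    case False
    with assms \<open>v \<in> C\<close> \<open>v' \<in> C\<close> show ?thesis by (metis not_less)
  qed
  then show "v = v'" ..
qed

lemma uv_concat_right_eq_0_if_eq_left:
  fixes u v :: "nat \<Rightarrow> 'a::ring_1_no_zero_divisors"
  assumes "(2::'a) \<noteq> 0" "uv_concat n u 0 = uv_concat n 0 v"
  shows "uv_concat n 0 v = 0"
proof -
  have "v i = 0" if "i < n" for i
  proof -
    from that fun_cong[OF assms(2), of i] fun_cong[OF assms(2), of "i + n"]
    have "v i + v i = 0"
      by (simp add: uv_concat_apply_less uv_concat_apply_add eq_neg_iff_add_eq_0)
    then show ?thesis using add_self_eq_0_iff[OF assms(1)] by blast
  qed
  then show ?thesis
    by (auto simp: uv_concat_def fun_eq_iff)
qed

lemma linear_code_uv_concat: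
  fixes C1 C2 :: "(nat \<Rightarrow> 'a::field) set"
  assumes two: "(2::'a) \<noteq> 0" and "linear_code n k1 C1" "linear_code n k2 C2"
  shows "linear_code (2 * n) (k1 + k2) {uv_concat n u v | u v. u \<in> C1 \<and> v \<in> C2}"
proof -
  interpret V: vector_space "fscale :: 'a \<Rightarrow> (nat \<Rightarrow> 'a) \<Rightarrow> _" by (rule vector_space_fscale)
  have C1: "V.subspace C1" "\<forall>u\<in>C1. \<forall>i\<ge>n. u i = 0" "V.dim C1 = k1"
    and C2: "V.subspace C2" "\<forall>v\<in>C2. \<forall>i\<ge>n. v i = 0" "V.dim C2 = k2"
    using assms(2,3) by (auto simp: linear_code_def)
  define f where "f = (\<lambda>u. uv_concat n u (0 :: nat \<Rightarrow> 'a))"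
  define g where "g = uv_concat n (0 :: nat \<Rightarrow> 'a)"
  have "Vector_Spaces.linear fscale fscale f" "Vector_Spaces.linear fscale fscale g"
    by (auto simp: Vector_Spaces.linear_iff vector_space_fscale f_def g_def uv_concat_def
        fscale_def fun_eq_iff algebra_simps)
  then interpret F: Vector_Spaces.linear fscale fscale f
    + G: Vector_Spaces.linear fscale fscale g .
  have "inj_on f (V.span C1)"
    unfolding V.span_eq_iff[THEN iffD2, OF C1(1)] f_def by (rule inj_on_uv_concat_left[OF C1(2)])
  moreover have "inj_on g (V.span C2)"
    unfolding V.span_eq_iff[THEN iffD2, OF C2(1)] g_def by (rule inj_on_uv_concat_right[OF C2(2)])
  ultimately have dim_f: "V.dim (f ` C1) = k1" and dim_g: "V.dim (g ` C2) = k2"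
    using F.dim_image_eq_if_inj_on G.dim_image_eq_if_inj_on C1(3) C2(3) by simp_all
  have "f ` C1 \<inter> g ` C2 \<subseteq> {0}"
    using uv_concat_right_eq_0_if_eq_left[OF two] by (auto simp: f_def g_def)
  then have "f ` C1 \<inter> g ` C2 = {0}"
    using C1(1) C2(1) F.subspace_image G.subspace_image V.subspace_0 by blast
  moreover have "f ` C1 \<union> g ` C2 \<subseteq> V.span ((\<lambda>k i. if i = k then 1 else 0) ` {..<2 * n})"
    by (intro subsetI in_span_unit_vectors) (auto simp: f_def g_def uv_concat_def cong: if_cong)
  ultimately have "V.dim {a + b | a b. a \<in> f ` C1 \<and> b \<in> g ` C2} = k1 + k2"
    using V.dim_sums_eq_add_if_Int_zero[OF F.subspace_image[OF C1(1)] G.subspace_image[OF C2(1)]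
        _ finite_imageI[OF finite_lessThan]] dim_f dim_g
    by simp
  moreover have "V.subspace {a + b | a b. a \<in> f ` C1 \<and> b \<in> g ` C2}"
    using C1(1) C2(1) by (intro V.subspace_sums F.subspace_image G.subspace_image)
  moreover have "uv_concat n u v = f u + g v" for u v
    by (simp add: f_def g_def uv_concat_def fun_eq_iff)
  then have "{uv_concat n u v | u v. u \<in> C1 \<and> v \<in> C2} = {a + b | a b. a \<in> f ` C1 \<and> b \<in> g ` C2}"
    by auto
  moreover have "\<forall>c \<in> {uv_concat n u v | u v. u \<in> C1 \<and> v \<in> C2}. \<forall>i\<ge>2 * n. c i = 0"
    by (auto simp: uv_concat_def)
  ultimately show ?thesis
    unfolding linear_code_def by simp
qed

theorem mainTheorem13:
  fixes C1 C2 :: "(nat \<Rightarrow> 'a::{field,finite}) set"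
    and n b :: nat and x :: "nat \<Rightarrow> 'a" and H :: "nat set"
  assumes "odd (card (UNIV :: 'a set))"
    and "n \<ge> 3" and "1 \<le> b" and "b \<le> n - 2"
    and "linear_code n (n - 1) C1" and "linear_code n (n - 1) C2"
    and "b_MDS n (n - 1) b C1" and "b_MDS n (n - 1) b C2"
    and "x \<in> C1 \<inter> C2"
    and "H \<in> holes n (chi n 1 x)"
    and "wb n b x = db n b C1"
    and "card H \<ge> b - 1"
    and "{0, n - 1} \<inter> H \<noteq> {}"
  shows "linear_code (2 * n) (2 * n - 2) {uv_concat n u v | u v. u \<in> C1 \<and> v \<in> C2}
         \<and> b_AMDS (2 * n) (2 * n - 2) b {uv_concat n u v | u v. u \<in> C1 \<and> v \<in> C2}
         \<and> db (2 * n) b {uv_concat n u v | u v. u \<in> C1 \<and> v \<in> C2} = b + 1"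
proof -
  let ?C = "{uv_concat n u v | u v. u \<in> C1 \<and> v \<in> C2}"
  have two: "(2::'a) \<noteq> 0" using assms(1) by (rule two_neq_zero_if_odd_card)
  have db_C1: "db n b C1 = b + 1" using assms(2,4,7) by (simp add: b_MDS_def)
  have "0 < b" "b \<le> n" using assms(3,4) by linarith+
  have lower: "b < wb (2 * n) b c" if "c \<in> ?C" "c \<noteq> 0" for c
    using that b_lt_wb_uv_concat[OF two \<open>0 < b\<close> \<open>b \<le> n\<close>, of C1] db_C1 by auto
  have "wb n b x = b + 1" using assms(11) db_C1 by simp
  then have "chi n b x \<noteq> {}" by (auto simp: wb_def)
  then obtain k where "k < n" "x k \<noteq> 0"
    unfolding chi_eq_UN_window_starts by blast
  then have "uv_concat n x x \<noteq> 0" by (auto simp: uv_concat_self_eq_0_iff[OF two])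
  moreover have "wb (2 * n) b (uv_concat n x x) \<le> b + 1"
    using wb_uv_concat_self_le[OF assms(10,12,13) \<open>b \<le> n\<close>] \<open>wb n b x = b + 1\<close> by simp
  moreover have "uv_concat n x x \<in> ?C" using assms(9) by blast
  ultimately have "db (2 * n) b ?C = b + 1"
    using lower by (intro db_eqI[of "uv_concat n x x"]) (auto simp: Suc_le_eq antisym)
  moreover have "linear_code (2 * n) (2 * n - 2) ?C"
    using linear_code_uv_concat[OF two assms(5,6)] assms(2) by (simp add: numeral_2_eq_2)
  ultimately show ?thesis
    using assms(2,4) by (simp add: b_AMDS_def)
qed

end
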